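(* Let $\mathbb{F}$ be any field and let $G=([n],E)$ be a simple undirected graph. Let $\mathcal{A}_G\le\Lambda(n,\mathbb{F})$ be the alternating matrix space spanned by the matrices $A_{i,j}$ with $\{i,j\}\in E$. Then: (1) for every $s\in\mathbb{N}$, $G$ has an independent set of size $s$ if and only if $\mathcal{A}_G$ has an isotropic space of dimension $s$; in particular $\alpha(G)=\alpha(\mathcal{A}_G)$; (2) for every $c\in\mathbb{N}$, $G$ has a vertex $c$-coloring (a partition of $[n]$ into $c$ independent sets) if and only if $\mathcal{A}_G$ has an isotropic $c$-decomposition; in particular $\chi(G)=\chi(\mathcal{A}_G)$.
   Context: $\Lambda(n,\mathbb{F})$ is the space of $n\times n$ alternating matrices over $\mathbb{F}$ (matrices $A$ with $v^tAv=0$ for all $v\in\mathbb{F}^n$). An alternating matrix space is a linear subspace $\mathcal{A}\le\Lambda(n,\mathbb{F})$. For $i<j$, $A_{i,j}$ is the $n\times n$ matrix with $(i,j)$ entry $1$, $(j,i)$ entry $-1$, all other entries $0$. A subspace $U\le\mathbb{F}^n$ is an isotropic space of $\mathcal{A}$ if $u^tAu'=0$ for all $u,u'\in U$ and all $A\in\mathcal{A}$. An isotropic $c$-decomposition of $\mathcal{A}$ is a direct sum decomposition $\mathbb{F}^n=U_1\oplus\cdots\oplus U_c$ into $c$ nonzero subspaces each of which is an isotropic space of $\mathcal{A}$. $\alpha(\mathcal{A})$ is the maximum dimension of an isotropic space of $\mathcal{A}$, and $\chi(\mathcal{A})$ is the minimum $c$ such that $\mathcal{A}$ admits an isotropic $c$-decomposition.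 $\alpha(G)$ and $\chi(G)$ are the independence number and chromatic number of $G$. *)

theory Defs
  imports "HOL-Analysis.Analysis"
begin

text \<open>Vertex set [n] is modelled by a finite linearly ordered type 'n (n = CARD('n));
  F^n is 'a ^ 'n for a field 'a, with the library vector space structure vec.*;
  n x n matrices are 'a ^ 'n ^ 'n.\<close>

definition simple_graph :: "('n \<Rightarrow> 'n \<Rightarrow> bool) \<Rightarrow> bool" where
  "simple_graph E \<longleftrightarrow> (\<forall>i j. E i j \<longrightarrow> E j i) \<and> (\<forall>i. \<not> E i i)"

definition elem_alt :: "'n \<Rightarrow> 'n \<Rightarrow> 'a::field ^ 'n ^ 'n" where
  "elem_alt i j = (\<chi> a b. if a = i \<and> b = j then 1 else if a = j \<and> b = i then - 1 else 0)"

definition bform :: "'a::field ^ 'n ^ 'n \<Rightarrow> 'a ^ 'n \<Rightarrow> 'a ^ 'n \<Rightarrow> 'a" where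
  "bform A u v = (\<Sum>i\<in>UNIV. \<Sum>j\<in>UNIV. u $ i * A $ i $ j * v $ j)"

definition graph_alt_space :: "('n::{finite,linorder} \<Rightarrow> 'n::{finite,linorder} \<Rightarrow> bool) \<Rightarrow> ('a::field ^ 'n::{finite,linorder} ^ 'n::{finite,linorder}) set" where
  "graph_alt_space E =
     {A. \<exists>c.
          A = (\<chi> a b. \<Sum>p\<in>{(i, j). i < j \<and> E i j}. c p * elem_alt (fst p) (snd p) $ a $ b)}"

definition isotropic :: "('a::field ^ 'n ^ 'n) set \<Rightarrow> ('a ^ 'n) set \<Rightarrow> bool" where
  "isotropic \<A> U \<longleftrightarrow> vec.subspace U \<and> (\<forall>u\<in>U. \<forall>u'\<in>U. \<forall>A\<in>\<A>. bform A u u' = 0)"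

definition isotropic_decomp :: "('a::field ^ 'n ^ 'n) set \<Rightarrow> nat \<Rightarrow> (nat \<Rightarrow> ('a ^ 'n) set) \<Rightarrow> bool" where
  "isotropic_decomp \<A> c U \<longleftrightarrow>
     (\<forall>k<c. isotropic \<A> (U k) \<and> U k \<noteq> {0}) \<and>
     (\<forall>v :: 'a ^ 'n. \<exists>!f :: nat \<Rightarrow> 'a ^ 'n.
         (\<forall>k<c. f k \<in> U k) \<and> (\<forall>k\<ge>c. f k = 0) \<and> v = (\<Sum>k<c. f k))"

definition independent_set :: "('n \<Rightarrow> 'n \<Rightarrow> bool) \<Rightarrow> 'n set \<Rightarrow> bool" where
  "independent_set E S \<longleftrightarrow> (\<forall>i\<in>S. \<forall>j\<in>S. \<not> E i j)"

definition coloring :: "('n \<Rightarrow> 'n \<Rightarrow> bool) \<Rightarrow> nat \<Rightarrow> (nat \<Rightarrow> 'n set) \<Rightarrow> bool" where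
  "coloring E c V \<longleftrightarrow>
     (\<forall>k<c. V k \<noteq> {} \<and> independent_set E (V k)) \<and>
     (\<forall>k<c. \<forall>l<c. k \<noteq> l \<longrightarrow> V k \<inter> V l = {}) \<and>
     (\<Union>k<c. V k) = UNIV"

definition graph_alpha :: "('n::finite \<Rightarrow> 'n \<Rightarrow> bool) \<Rightarrow> nat" where
  "graph_alpha E = Max {card S | S. independent_set E S}"

definition graph_chi :: "('n::finite \<Rightarrow> 'n \<Rightarrow> bool) \<Rightarrow> nat" where
  "graph_chi E = (LEAST c. \<exists>V. coloring E c V)"

definition space_alpha :: "('a::field ^ 'n::finite ^ 'n) set \<Rightarrow> nat" where
  "space_alpha \<A> = Max {vec.dim U | U. isotropic \<A> U}"

definition space_chi :: "('a::field ^ 'n::finite ^ 'n) set \<Rightarrow> nat" where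
  "space_chi \<A> = (LEAST c. \<exists>U. isotropic_decomp \<A> c U)"

end

theory Submission
  imports Defs
begin

text \<open>
  Call \<open>S\<close> a pivot set of a subspace \<open>U\<close> of \<open>F^n\<close> if restriction to the coordinates in \<open>S\<close>
  maps \<open>U\<close> isomorphically onto \<open>F^S\<close>. Every subspace has a pivot set, of size \<open>dim U\<close>
  (the pivot columns of a reduced row echelon form). If \<open>U\<close> is isotropic for \<open>A_G\<close>, every
  pivot set of \<open>U\<close> is independent in \<open>G\<close>: for an edge \<open>{i, j}\<close> inside it, the vectors
  \<open>u, w \<in> U\<close> restricting to \<open>e_i, e_j\<close> give \<open>u^t A_{i,j} w = \<plusminus>1\<close>. Conversely the coordinate
  subspace of an independent set is isotropic. This proves (1), and colour classes likewise
  give isotropic decompositions.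

  For the converse of (2) one needs pivot sets of the summands of \<open>F^n = U_1 \<oplus> \<dots> \<oplus> U_c\<close> that
  partition \<open>[n]\<close>. They are found by induction on the coordinate set: for a coordinate \<open>i\<close>,
  some summand's component of \<open>e_i\<close> has nonzero \<open>i\<close>-th entry; cutting that summand down to its
  vectors vanishing at \<open>i\<close> and projecting all other summands away from \<open>i\<close> yields a direct
  sum decomposition of the remaining coordinates, and \<open>i\<close> joins the pivot set of the
  distinguished summand.
\<close>

definition coord_subspace :: "'n set \<Rightarrow> ('a::field ^ 'n) set" where
  "coord_subspace I = {v. \<forall>j. j \<notin> I \<longrightarrow> v $ j = 0}"

definition restrict_coords :: "'n set \<Rightarrow> 'a::field ^ 'n \<Rightarrow> 'a ^ 'n" where
  "restrict_coords J v = (\<chi> j. if j \<in> J then v $ j else 0)"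

lemma restrict_coords_nth [simp]: "restrict_coords J v $ j = (if j \<in> J then v $ j else 0)"
  by (simp add: restrict_coords_def)

lemma restrict_coords_zero [simp]: "restrict_coords J 0 = 0"
  by (simp add: vec_eq_iff)

lemma restrict_coords_in_coord_subspace: "restrict_coords J v \<in> coord_subspace J"
  by (simp add: coord_subspace_def)

lemma restrict_coords_id: "v \<in> coord_subspace J \<Longrightarrow> restrict_coords J v = v"
  by (auto simp: coord_subspace_def vec_eq_iff)

lemma restrict_coords_sum: "restrict_coords J (sum f A) = (\<Sum>x\<in>A. restrict_coords J (f x))"
  by (simp add: vec_eq_iff)

lemma subspace_coord_subspace: "vec.subspace (coord_subspace I)"
  by (rule vec.subspaceI) (auto simp: coord_subspace_def)

lemma linear_restrict_coords: "Vector_Spaces.linear (*s) (*s) (restrict_coords J)"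
  by (auto simp: Vector_Spaces.linear_iff vec.vector_space_axioms vec_eq_iff)

lemma subspace_restrict_coords_image: "vec.subspace U \<Longrightarrow> vec.subspace (restrict_coords J ` U)"
  by (rule vec.linear_subspace_image[OF linear_restrict_coords])

lemma coord_subspace_insert:
  "v \<in> coord_subspace (insert i J) \<Longrightarrow> v $ i = 0 \<Longrightarrow> v \<in> coord_subspace J"
  by (auto simp: coord_subspace_def)

lemma restrict_coords_plus_axis:
  "v \<in> coord_subspace (insert i J) \<Longrightarrow> i \<notin> J \<Longrightarrow> v = restrict_coords J v + (v $ i) *s axis i 1"
  by (auto simp: vec_eq_iff coord_subspace_def axis_def)

definition has_coord_units :: "('a::field ^ 'n) set \<Rightarrow> 'n set \<Rightarrow> bool" where
  "has_coord_units U S \<longleftrightarrow> (\<forall>j\<in>S. \<exists>u\<in>U. u $ j = 1 \<and> (\<forall>j'\<in>S. j' \<noteq> j \<longrightarrow> u $ j' = 0))"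

definition coords_determine :: "('a::field ^ 'n) set \<Rightarrow> 'n set \<Rightarrow> bool" where
  "coords_determine U S \<longleftrightarrow> (\<forall>u\<in>U. (\<forall>j\<in>S. u $ j = 0) \<longrightarrow> u = 0)"

definition pivot_set :: "('a::field ^ 'n) set \<Rightarrow> 'n set \<Rightarrow> bool" where
  "pivot_set U S \<longleftrightarrow> has_coord_units U S \<and> coords_determine U S"

lemma has_coord_unitsE:
  assumes "has_coord_units U S"
  obtains g where "\<And>j. j \<in> S \<Longrightarrow> g j \<in> U"
    and "\<And>j j'. j \<in> S \<Longrightarrow> j' \<in> S \<Longrightarrow> g j $ j' = (if j' = j then 1 else 0)"
proof -
  from assms obtain g where "\<forall>j\<in>S. g j \<in> U \<and> g j $ j = 1 \<and> (\<forall>j'\<in>S. j' \<noteq> j \<longrightarrow> g j $ j' = 0)"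
    unfolding has_coord_units_def by metis
  then show ?thesis by (intro that) auto
qed

lemma sum_scaled_coord_units_nth:
  fixes g :: "'n::finite \<Rightarrow> 'a::field ^ 'n"
  assumes "k \<in> S" and "\<And>j. j \<in> S \<Longrightarrow> g j $ k = (if k = j then 1 else 0)"
  shows "(\<Sum>j\<in>S. h j *s g j) $ k = h k"
proof -
  have "(\<Sum>j\<in>S. h j *s g j) $ k = (\<Sum>j\<in>S. if j = k then h k else 0)"
    unfolding sum_component by (intro sum.cong) (auto simp: assms(2))
  then show ?thesis using assms(1) by simp
qed

lemma dim_eq_card_pivot_set:
  fixes U :: "('a::field ^ 'n::finite) set"
  assumes U: "vec.subspace U" and "pivot_set U S"
  shows "vec.dim U = card S"
proof -
  obtain g where g_in: "\<And>j. j \<in> S \<Longrightarrow> g j \<in> U"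
    and g_nth: "\<And>j j'. j \<in> S \<Longrightarrow> j' \<in> S \<Longrightarrow> g j $ j' = (if j' = j then 1 else 0)"
    using assms(2) has_coord_unitsE unfolding pivot_set_def by blast
  have coord: "(\<Sum>j\<in>S. h j *s g j) $ k = h k" if "k \<in> S" for h k
    using that g_nth by (intro sum_scaled_coord_units_nth) auto
  have g_inj: "inj_on g S"
    by (rule inj_onI) (metis g_nth zero_neq_one)
  have "vec.independent (g ` S)"
  proof (rule vec.independent_if_scalars_zero)
    fix f x assume sum0: "(\<Sum>x\<in>g ` S. f x *s x) = 0" and "x \<in> g ` S"
    then obtain k where k: "k \<in> S" "x = g k" by auto
    have "(\<Sum>j\<in>S. f (g j) *s g j) = 0"
      using sum0 by (simp add: sum.reindex[OF g_inj])
    then show "f x = 0" using coord[OF k(1), of "f \<circ> g"] k by simp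
  qed simp
  moreover have "U \<subseteq> vec.span (g ` S)"
  proof
    fix u assume u: "u \<in> U"
    let ?w = "\<Sum>j\<in>S. (u $ j) *s g j"
    have "?w \<in> U" using U g_in by (intro vec.subspace_sum vec.subspace_scale) auto
    then have "u - ?w \<in> U" using U u vec.subspace_diff by blast
    moreover have "\<forall>j\<in>S. (u - ?w) $ j = 0" using coord by simp
    ultimately have "u = ?w" using assms(2) unfolding pivot_set_def coords_determine_def by auto
    moreover have "?w \<in> vec.span (g ` S)"
      by (intro vec.span_sum vec.span_scale vec.span_base) auto
    ultimately show "u \<in> vec.span (g ` S)" by simp
  qed
  ultimately show ?thesis
    using g_in by (intro vec.dim_unique[of "g ` S"]) (auto simp: card_image[OF g_inj])
qed

lemma pivot_set_coord_subspace: "pivot_set (coord_subspace S :: ('a::field ^ 'n) set) S"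
  unfolding pivot_set_def has_coord_units_def coords_determine_def
proof (intro conjI ballI impI)
  fix j assume "j \<in> S"
  then show "\<exists>u\<in>coord_subspace S. u $ j = (1::'a) \<and> (\<forall>j'\<in>S. j' \<noteq> j \<longrightarrow> u $ j' = 0)"
    by (intro bexI[of _ "axis j 1"]) (auto simp: coord_subspace_def axis_def)
qed (auto simp: coord_subspace_def vec_eq_iff)

lemma pivot_set_insert:
  fixes U :: "('a::field ^ 'n::finite) set"
  assumes U: "vec.subspace U" and U_supp: "U \<subseteq> coord_subspace (insert i J)"
    and "i \<notin> J" "S \<subseteq> J" and w: "w \<in> U" "w $ i \<noteq> 0"
    and piv: "pivot_set (U \<inter> coord_subspace J) S"
  shows "pivot_set U (insert i S)"
proof -
  obtain g where g_in: "\<And>j. j \<in> S \<Longrightarrow> g j \<in> U \<inter> coord_subspace J"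
    and g_nth: "\<And>j j'. j \<in> S \<Longrightarrow> j' \<in> S \<Longrightarrow> g j $ j' = (if j' = j then 1 else 0)"
    using piv has_coord_unitsE unfolding pivot_set_def by blast
  have g_i: "g j $ i = 0" if "j \<in> S" for j
    using g_in[OF that] \<open>i \<notin> J\<close> by (auto simp: coord_subspace_def)
  \<comment> \<open>the unit vector for \<open>i\<close>: normalise \<open>w\<close> and clear its coordinates in \<open>S\<close>\<close>
  define w' where "w' = (1 / w $ i) *s w - (\<Sum>j\<in>S. (w $ j / w $ i) *s g j)"
  have "w' \<in> U"
    unfolding w'_def using U w g_in
    by (intro vec.subspace_diff vec.subspace_scale vec.subspace_sum) auto
  moreover have "w' $ i = 1"
    using w(2) g_i by (simp add: w'_def)
  moreover have "w' $ j = 0" if "j \<in> S" for j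
    using sum_scaled_coord_units_nth[OF that, of g "\<lambda>j. w $ j / w $ i"] g_nth that w(2)
    by (simp add: w'_def)
  ultimately have "has_coord_units U (insert i S)"
    unfolding has_coord_units_def
  proof (intro ballI)
    fix j assume "j \<in> insert i S"
    then show "\<exists>u\<in>U. u $ j = 1 \<and> (\<forall>j'\<in>insert i S. j' \<noteq> j \<longrightarrow> u $ j' = 0)"
    proof
      assume "j \<in> S"
      then show ?thesis using g_in g_nth g_i by (intro bexI[of _ "g j"]) auto
    qed (use \<open>w' \<in> U\<close> \<open>w' $ i = 1\<close> \<open>\<And>j. j \<in> S \<Longrightarrow> w' $ j = 0\<close> in blast)
  qed
  moreover have "coords_determine U (insert i S)"
    using piv U_supp unfolding pivot_set_def coords_determine_def
    by (auto dest: coord_subspace_insert)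
  ultimately show ?thesis unfolding pivot_set_def ..
qed

lemma exists_pivot_set:
  fixes U :: "('a::field ^ 'n::finite) set"
  assumes "vec.subspace U" "U \<subseteq> coord_subspace I"
  shows "\<exists>S\<subseteq>I. pivot_set U S"
  using finite[of I] assms
proof (induction I arbitrary: U rule: finite_induct)
  case empty
  then have "U \<subseteq> {0}" by (auto simp: coord_subspace_def vec_eq_iff)
  then show ?case by (auto simp: pivot_set_def has_coord_units_def coords_determine_def)
next
  case (insert i J)
  show ?case
  proof (cases "\<exists>w\<in>U. w $ i \<noteq> 0")
    case True
    then obtain w where "w \<in> U" "w $ i \<noteq> 0" by blast
    moreover obtain S where "S \<subseteq> J" "pivot_set (U \<inter> coord_subspace J) S"
      using insert.IH[of "U \<inter> coord_subspace J"] insert.prems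
      by (auto intro: vec.subspace_inter subspace_coord_subspace)
    ultimately show ?thesis
      using pivot_set_insert[OF insert.prems insert.hyps(2)] by blast
  next
    case False
    then have "U \<subseteq> coord_subspace J"
      using insert.prems(2) by (auto dest: coord_subspace_insert)
    then show ?thesis using insert.IH[OF insert.prems(1)] by blast
  qed
qed

lemma pivot_set_restrict_coords_image:
  fixes U :: "('a::field ^ 'n) set"
  assumes "S \<subseteq> J" and piv: "pivot_set (restrict_coords J ` U) S"
    and kernel: "\<And>g. g \<in> U \<Longrightarrow> restrict_coords J g = 0 \<Longrightarrow> g = 0"
  shows "pivot_set U S"
proof -
  have same: "restrict_coords J g $ j = g $ j" if "j \<in> S" for g and j
    using that \<open>S \<subseteq> J\<close> by auto
  have "has_coord_units U S"
    unfolding has_coord_units_def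
  proof
    fix j assume "j \<in> S"
    then obtain g where "g \<in> U" "restrict_coords J g $ j = 1"
      "\<forall>j'\<in>S. j' \<noteq> j \<longrightarrow> restrict_coords J g $ j' = 0"
      using piv unfolding pivot_set_def has_coord_units_def by blast
    then show "\<exists>u\<in>U. u $ j = 1 \<and> (\<forall>j'\<in>S. j' \<noteq> j \<longrightarrow> u $ j' = 0)"
      using same \<open>j \<in> S\<close> by (metis (no_types, lifting))
  qed
  moreover have "coords_determine U S"
    unfolding coords_determine_def
  proof (intro ballI impI)
    fix g assume "g \<in> U" "\<forall>j\<in>S. g $ j = 0"
    then have "restrict_coords J g = 0"
      using piv same unfolding pivot_set_def coords_determine_def by auto
    then show "g = 0" using kernel \<open>g \<in> U\<close> by blast
  qed
  ultimately show ?thesis unfolding pivot_set_def ..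
qed

definition direct_sum_decomp :: "(nat \<Rightarrow> ('a::field ^ 'n) set) \<Rightarrow> nat \<Rightarrow> 'n set \<Rightarrow> bool" where
  "direct_sum_decomp U c I \<longleftrightarrow>
     (\<forall>k<c. vec.subspace (U k) \<and> U k \<subseteq> coord_subspace I) \<and>
     (\<forall>v\<in>coord_subspace I. \<exists>f. (\<forall>k<c. f k \<in> U k) \<and> v = (\<Sum>k<c. f k)) \<and>
     (\<forall>f. (\<forall>k<c. f k \<in> U k) \<and> (\<Sum>k<c. f k) = 0 \<longrightarrow> (\<forall>k<c. f k = 0))"

lemma direct_sum_decomp_subspace:
  "direct_sum_decomp U c I \<Longrightarrow> k < c \<Longrightarrow> vec.subspace (U k)"
  unfolding direct_sum_decomp_def by simp

lemma direct_sum_decomp_subset: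
  "direct_sum_decomp U c I \<Longrightarrow> k < c \<Longrightarrow> U k \<subseteq> coord_subspace I"
  unfolding direct_sum_decomp_def by simp

lemma direct_sum_decomp_unique:
  assumes decomp: "direct_sum_decomp U c I"
    and a: "\<forall>k<c. a k \<in> U k" and b: "\<forall>k<c. b k \<in> U k"
    and "(\<Sum>k<c. a k) = (\<Sum>k<c. b k)"
  shows "\<forall>k<c. a k = b k"
proof -
  have "\<forall>k<c. a k - b k \<in> U k"
    using a b direct_sum_decomp_subspace[OF decomp] vec.subspace_diff by blast
  moreover have "(\<Sum>k<c. a k - b k) = 0"
    using assms(4) by (simp add: sum_subtractf)
  ultimately have "\<forall>k<c. a k - b k = 0"
    using decomp unfolding direct_sum_decomp_def by (metis (no_types, lifting))
  then show ?thesis by simp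
qed

lemma direct_sum_decomp_other_components_zero:
  assumes decomp: "direct_sum_decomp U c I" and "k < c" "v \<in> U k"
    and u: "\<forall>l<c. u l \<in> U l" "v = (\<Sum>l<c. u l)"
    and "l < c" "l \<noteq> k"
  shows "u l = 0"
proof -
  let ?a = "\<lambda>l. if l = k then v else 0"
  have a_in: "\<forall>l<c. ?a l \<in> U l"
    using assms(3) vec.subspace_0[OF direct_sum_decomp_subspace[OF decomp]] by simp
  have "(\<Sum>l<c. u l) = (\<Sum>l<c. ?a l)"
    using \<open>k < c\<close> u(2) by simp
  then have "\<forall>l<c. u l = ?a l"
    by (rule direct_sum_decomp_unique[OF decomp u(1) a_in])
  then show ?thesis using assms(6,7) by simp
qed

definition drop_coord ::
    "(nat \<Rightarrow> ('a::field ^ 'n) set) \<Rightarrow> nat \<Rightarrow> 'n set \<Rightarrow> nat \<Rightarrow> ('a ^ 'n) set" where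
  "drop_coord U k0 J k = (if k = k0 then U k \<inter> coord_subspace J else restrict_coords J ` U k)"

context
  fixes U :: "nat \<Rightarrow> ('a::field ^ 'n::finite) set" and c k0 :: nat and i :: 'n and J :: "'n set"
    and u :: "nat \<Rightarrow> 'a ^ 'n"
  assumes decomp: "direct_sum_decomp U c (insert i J)" and i_notin: "i \<notin> J"
    and u_in: "\<forall>k<c. u k \<in> U k" and u_sum: "axis i 1 = (\<Sum>k<c. u k)"
    and k0: "k0 < c" and u_k0: "u k0 $ i \<noteq> 0"
begin

lemma restrict_coords_kernel_drop_coord:
  assumes "k < c" "k \<noteq> k0" "g \<in> U k" "restrict_coords J g = 0"
  shows "g = 0"
proof (rule ccontr)
  assume "g \<noteq> 0"
  have g_supp: "g \<in> coord_subspace (insert i J)"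
    using direct_sum_decomp_subset[OF decomp \<open>k < c\<close>] \<open>g \<in> U k\<close> by blast
  have g_zero: "g $ j = 0" if "j \<noteq> i" for j
  proof (cases "j \<in> J")
    case True
    then show ?thesis using assms(4) by (metis restrict_coords_nth zero_index)
  qed (use g_supp that in \<open>auto simp: coord_subspace_def\<close>)
  with \<open>g \<noteq> 0\<close> have "g $ i \<noteq> 0"
    by (metis vec_eq_iff zero_index)
  then have "axis i 1 = (1 / g $ i) *s g"
    using g_zero by (auto simp: vec_eq_iff axis_def)
  then have "axis i 1 \<in> U k"
    using vec.subspace_scale[OF direct_sum_decomp_subspace[OF decomp \<open>k < c\<close>] \<open>g \<in> U k\<close>] by simp
  then have "u k0 = 0"
    using direct_sum_decomp_other_components_zero[OF decomp \<open>k < c\<close> _ u_in u_sum k0] assms(2)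
    by blast
  with u_k0 show False by simp
qed

lemma drop_coord_spans:
  assumes "v \<in> coord_subspace J"
  shows "\<exists>f. (\<forall>k<c. f k \<in> drop_coord U k0 J k) \<and> v = (\<Sum>k<c. f k)"
proof -
  have "v \<in> coord_subspace (insert i J)"
    using assms by (auto simp: coord_subspace_def)
  then obtain x where x_in: "\<forall>k<c. x k \<in> U k" and x_sum: "v = (\<Sum>k<c. x k)"
    using decomp unfolding direct_sum_decomp_def by (metis (no_types, lifting))
  \<comment> \<open>shift by a multiple of the decomposition of \<open>axis i 1\<close> to clear the \<open>i\<close>-th entry of the \<open>k0\<close> component\<close>
  define y where "y k = x k - (x k0 $ i / u k0 $ i) *s u k" for k
  have y_in: "y k \<in> U k" if "k < c" for k
    using x_in u_in direct_sum_decomp_subspace[OF decomp that] that unfolding y_def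
    by (meson vec.subspace_diff vec.subspace_scale)
  have "y k0 $ i = 0"
    using u_k0 by (simp add: y_def)
  then have y_k0: "y k0 \<in> coord_subspace J"
    using coord_subspace_insert direct_sum_decomp_subset[OF decomp k0] y_in[OF k0] by blast
  have "(\<Sum>k<c. y k) = v - (x k0 $ i / u k0 $ i) *s axis i 1"
    by (simp add: y_def sum_subtractf vec.scale_sum_right x_sum u_sum)
  then have "(\<Sum>k<c. restrict_coords J (y k)) = v"
    using assms i_notin
    by (auto simp: restrict_coords_sum[symmetric] vec_eq_iff coord_subspace_def axis_def)
  moreover have "\<forall>k<c. restrict_coords J (y k) \<in> drop_coord U k0 J k"
    using y_in y_k0 by (auto simp: drop_coord_def restrict_coords_id)
  ultimately show ?thesis by metis
qed

lemma drop_coord_independent: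
  assumes f_in: "\<forall>k<c. f k \<in> drop_coord U k0 J k" and f_sum: "(\<Sum>k<c. f k) = 0"
  shows "\<forall>k<c. f k = 0"
proof -
  have "\<exists>g\<in>U k. restrict_coords J g = f k \<and> (k = k0 \<longrightarrow> g = f k0)" if "k < c" for k
  proof -
    have "f k \<in> drop_coord U k0 J k" using f_in that by blast
    then show ?thesis by (cases "k = k0") (auto simp: drop_coord_def restrict_coords_id)
  qed
  then obtain g where g_in: "\<forall>k<c. g k \<in> U k" and g_restrict: "\<forall>k<c. restrict_coords J (g k) = f k"
    and g_k0: "g k0 = f k0"
    using k0 by (metis lessThan_iff)
  define T where "T = (\<Sum>k<c. g k $ i)"
  have "(\<Sum>k<c. g k) = (\<Sum>k<c. restrict_coords J (g k) + (g k $ i) *s axis i 1)"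
    using g_in direct_sum_decomp_subset[OF decomp] restrict_coords_plus_axis[OF _ i_notin]
    by (intro sum.cong) auto
  also have "\<dots> = (\<Sum>k<c. f k) + T *s axis i 1"
    using g_restrict by (simp add: sum.distrib T_def vec.scale_sum_left)
  also have "\<dots> = (\<Sum>k<c. T *s u k)"
    using f_sum by (simp add: u_sum vec.scale_sum_right)
  finally have sum_eq: "(\<Sum>k<c. g k) = (\<Sum>k<c. T *s u k)" .
  have "\<forall>k<c. T *s u k \<in> U k"
    using u_in by (simp add: vec.subspace_scale[OF direct_sum_decomp_subspace[OF decomp]])
  from direct_sum_decomp_unique[OF decomp g_in this sum_eq]
  have g_eq: "\<forall>k<c. g k = T *s u k" .
  have "g k0 $ i = 0"
    using f_in k0 g_k0 i_notin by (auto simp: drop_coord_def coord_subspace_def)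
  with g_eq k0 u_k0 have "T = 0" by simp
  then show ?thesis using g_eq g_restrict by simp
qed

lemma direct_sum_decomp_drop_coord: "direct_sum_decomp (drop_coord U k0 J) c J"
proof -
  have "vec.subspace (drop_coord U k0 J k) \<and> drop_coord U k0 J k \<subseteq> coord_subspace J"
    if "k < c" for k
    using direct_sum_decomp_subspace[OF decomp that]
    by (auto simp: drop_coord_def restrict_coords_in_coord_subspace
        intro: vec.subspace_inter subspace_coord_subspace subspace_restrict_coords_image)
  then show ?thesis
    unfolding direct_sum_decomp_def using drop_coord_spans drop_coord_independent by blast
qed

lemma pivot_set_drop_coord:
  assumes "k < c" "S \<subseteq> J" "pivot_set (drop_coord U k0 J k) S"
  shows "pivot_set (U k) (if k = k0 then insert i S else S)"
proof (cases "k = k0")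
  case True
  have "u k0 \<in> U k0" using u_in k0 by blast
  with True assms(3) show ?thesis
    using pivot_set_insert[OF direct_sum_decomp_subspace[OF decomp k0]
        direct_sum_decomp_subset[OF decomp k0] i_notin \<open>S \<subseteq> J\<close> _ u_k0]
    by (simp add: drop_coord_def)
next
  case False
  with assms(3) have "pivot_set (restrict_coords J ` U k) S"
    by (simp add: drop_coord_def)
  from pivot_set_restrict_coords_image[OF \<open>S \<subseteq> J\<close> this
      restrict_coords_kernel_drop_coord[OF \<open>k < c\<close> False]]
  show ?thesis using False by simp
qed

end

lemma exists_pivot_partition:
  fixes U :: "nat \<Rightarrow> ('a::field ^ 'n::finite) set"
  assumes "direct_sum_decomp U c I"
  shows "\<exists>S. (\<forall>k<c. S k \<subseteq> I \<and> pivot_set (U k) (S k)) \<and>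
             (\<forall>k<c. \<forall>l<c. k \<noteq> l \<longrightarrow> S k \<inter> S l = {}) \<and> (\<Union>k<c. S k) = I"
  using finite[of I] assms
proof (induction I arbitrary: U rule: finite_induct)
  case empty
  have "U k \<subseteq> {0}" if "k < c" for k
    using direct_sum_decomp_subset[OF empty that] by (auto simp: coord_subspace_def vec_eq_iff)
  then have "\<forall>k<c. pivot_set (U k) {}"
    by (auto simp: pivot_set_def has_coord_units_def coords_determine_def)
  then show ?case by (intro exI[of _ "\<lambda>_. {}"]) simp
next
  case (insert i J)
  have "axis i 1 \<in> coord_subspace (insert i J)"
    by (simp add: coord_subspace_def axis_def)
  then obtain u where u_in: "\<forall>k<c. u k \<in> U k" and u_sum: "axis i 1 = (\<Sum>k<c. u k)"
    using insert.prems unfolding direct_sum_decomp_def by (metis (no_types, lifting))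
  have "(\<Sum>k<c. u k $ i) = 1"
    using u_sum by (metis axis_nth sum_component)
  then obtain k0 where k0: "k0 < c" "u k0 $ i \<noteq> 0"
    by (metis (mono_tags, lifting) lessThan_iff sum.neutral zero_neq_one)
  note drop = direct_sum_decomp_drop_coord[OF insert.prems insert.hyps(2) u_in u_sum k0]
    pivot_set_drop_coord[OF insert.prems insert.hyps(2) u_in u_sum k0]
  obtain S where S: "\<forall>k<c. S k \<subseteq> J \<and> pivot_set (drop_coord U k0 J k) (S k)"
    and S_disj: "\<forall>k<c. \<forall>l<c. k \<noteq> l \<longrightarrow> S k \<inter> S l = {}" and S_un: "(\<Union>k<c. S k) = J"
    using insert.IH[OF drop(1)] by blast
  define S' where "S' k = (if k = k0 then insert i (S k) else S k)" for k
  have "\<forall>k<c. S' k \<subseteq> insert i J \<and> pivot_set (U k) (S' k)"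
    using S drop(2) unfolding S'_def by auto
  moreover have "\<forall>k<c. \<forall>l<c. k \<noteq> l \<longrightarrow> S' k \<inter> S' l = {}"
    using S S_disj insert.hyps(2) unfolding S'_def by auto
  moreover have "(\<Union>k<c. S' k) = insert i J"
    using S_un k0 unfolding S'_def by (auto split: if_splits)
  ultimately show ?case by blast
qed

lemma elem_alt_in_graph_alt_space:
  assumes "i < j" "E i j"
  shows "(elem_alt i j :: 'a::field ^ 'n::{finite,linorder} ^ 'n::{finite,linorder})
    \<in> graph_alt_space E"
proof -
  let ?P = "{(i, j). i < j \<and> E i j}"
  let ?c = "\<lambda>p. if p = (i, j) then (1::'a) else 0"
  have "(\<Sum>p\<in>?P. ?c p * elem_alt (fst p) (snd p) $ a $ b) = elem_alt i j $ a $ b" for a b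
  proof -
    have "(\<Sum>p\<in>?P. ?c p * elem_alt (fst p) (snd p) $ a $ b)
        = (\<Sum>p\<in>?P. if p = (i, j) then elem_alt (fst p) (snd p) $ a $ b else 0)"
      by (rule sum.cong) auto
    also have "\<dots> = elem_alt i j $ a $ b"
      using assms by (simp add: sum.delta')
    finally show ?thesis .
  qed
  then show ?thesis
    unfolding graph_alt_space_def by (intro CollectI exI[of _ ?c]) (simp add: vec_eq_iff)
qed

lemma bform_elem_alt:
  fixes u v :: "'a::field ^ 'n::finite"
  assumes "i \<noteq> j"
  shows "bform (elem_alt i j) u v = u $ i * v $ j - u $ j * v $ i"
proof -
  have row: "(\<Sum>b\<in>UNIV. u $ a * elem_alt i j $ a $ b * v $ b) =
      (if a = i then u $ i * v $ j else 0) - (if a = j then u $ j * v $ i else 0)" for a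
  proof -
    have "(\<Sum>b\<in>UNIV. u $ a * elem_alt i j $ a $ b * v $ b) =
        (\<Sum>b\<in>UNIV. (if a = i \<and> b = j then u $ i * v $ j else 0)
                   - (if a = j \<and> b = i then u $ j * v $ i else 0))"
      using assms by (intro sum.cong) (auto simp: elem_alt_def)
    then show ?thesis by (simp add: sum_subtractf)
  qed
  show ?thesis
    unfolding bform_def row by (simp add: sum_subtractf)
qed

lemma elem_alt_nth_eq_zero:
  assumes "\<not> (a = i \<and> b = j)" "\<not> (a = j \<and> b = i)"
  shows "elem_alt i j $ a $ b = 0"
  using assms by (simp add: elem_alt_def)

lemma isotropicD:
  "isotropic \<A> U \<Longrightarrow> A \<in> \<A> \<Longrightarrow> u \<in> U \<Longrightarrow> u' \<in> U \<Longrightarrow> bform A u u' = 0"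
  unfolding isotropic_def by blast

lemma independent_set_if_isotropic_coord_units:
  assumes E: "simple_graph E"
    and iso: "isotropic (graph_alt_space E :: ('a::field ^ 'n::{finite,linorder} ^ 'n::{finite,linorder}) set) U"
    and units: "has_coord_units U S"
  shows "independent_set E S"
  unfolding independent_set_def
proof (intro ballI notI)
  fix i j assume "i \<in> S" "j \<in> S" "E i j"
  have "i \<noteq> j" "E j i"
    using E \<open>E i j\<close> unfolding simple_graph_def by auto
  obtain u where u: "u \<in> U" "u $ i = 1" "u $ j = 0"
    using units \<open>i \<in> S\<close> \<open>j \<in> S\<close> \<open>i \<noteq> j\<close> unfolding has_coord_units_def by metis
  obtain w where w: "w \<in> U" "w $ j = 1" "w $ i = 0"
    using units \<open>i \<in> S\<close> \<open>j \<in> S\<close> \<open>i \<noteq> j\<close> unfolding has_coord_units_def by metis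
  have "\<exists>a b. a < b \<and> E a b \<and> bform (elem_alt a b) u w \<noteq> 0"
  proof (cases "i < j")
    case True
    then show ?thesis
      using bform_elem_alt[of i j u w] \<open>E i j\<close> u w by (intro exI[of _ i] exI[of _ j]) auto
  next
    case False
    with \<open>i \<noteq> j\<close> have "j < i" by auto
    then show ?thesis
      using bform_elem_alt[of j i u w] \<open>E j i\<close> u w by (intro exI[of _ j] exI[of _ i]) auto
  qed
  then obtain a b where "a < b" "E a b" "bform (elem_alt a b) u w \<noteq> 0"
    by blast
  moreover have "bform (elem_alt a b) u w = 0"
    using isotropicD[OF iso elem_alt_in_graph_alt_space[of a b E, OF \<open>a < b\<close> \<open>E a b\<close>] u(1) w(1)] .
  ultimately show False by simp
qed

lemma isotropic_coord_subspace:
  assumes "independent_set E S"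
  shows "isotropic (graph_alt_space E :: ('a::field ^ 'n::{finite,linorder} ^ 'n::{finite,linorder}) set)
    (coord_subspace S)"
  unfolding isotropic_def
proof (intro conjI ballI)
  fix u v :: "'a ^ 'n::{finite,linorder}" and A :: "'a ^ 'n::{finite,linorder} ^ 'n::{finite,linorder}"
  assume u: "u \<in> coord_subspace S" and v: "v \<in> coord_subspace S" and "A \<in> graph_alt_space E"
  from \<open>A \<in> graph_alt_space E\<close> obtain c where A: "A = (\<chi> a b. \<Sum>p\<in>{(i, j). i < j \<and> E i j}. c p * elem_alt (fst p) (snd p) $ a $ b)"
    unfolding graph_alt_space_def by blast
  have term_zero: "u $ a * (c p * elem_alt (fst p) (snd p) $ a $ b) * v $ b = 0"
    if p: "p \<in> {(i, j). i < j \<and> E i j}" for a b p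
  proof (cases "a \<in> S \<and> b \<in> S")
    case True
    then have "\<not> E a b" "\<not> E b a"
      using assms unfolding independent_set_def by auto
    moreover obtain i j where "p = (i, j)" "E i j"
      using p by auto
    ultimately have "c p * elem_alt i j $ a $ b = 0"
      using elem_alt_nth_eq_zero[of a i b j] by auto
    then show ?thesis
      using \<open>p = (i, j)\<close> by simp
  next
    case False
    then have "u $ a = 0 \<or> v $ b = 0"
      using u v unfolding coord_subspace_def by auto
    then show ?thesis by auto
  qed
  have "bform A u v = (\<Sum>a\<in>UNIV. \<Sum>b\<in>UNIV. \<Sum>p\<in>{(i, j). i < j \<and> E i j}.
      u $ a * (c p * elem_alt (fst p) (snd p) $ a $ b) * v $ b)"
    unfolding bform_def A by (simp add: sum_distrib_left sum_distrib_right)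
  also have "\<dots> = 0"
    by (intro sum.neutral ballI term_zero)
  finally show "bform A u v = 0" .
qed (rule subspace_coord_subspace)

lemma direct_sum_decomp_if_isotropic_decomp:
  assumes "isotropic_decomp \<A> c U"
  shows "direct_sum_decomp U c UNIV"
proof -
  have sub: "\<forall>k<c. vec.subspace (U k)"
    using assms unfolding isotropic_decomp_def isotropic_def by blast
  have "\<forall>k<c. f k = 0" if f: "\<forall>k<c. f k \<in> U k" "(\<Sum>k<c. f k) = 0" for f
  proof -
    define f' where "f' k = (if k < c then f k else 0)" for k
    have "(\<forall>k<c. f' k \<in> U k) \<and> (\<forall>k\<ge>c. f' k = 0) \<and> 0 = (\<Sum>k<c. f' k)"
      using f by (simp add: f'_def)
    moreover have "(\<forall>k<c. (\<lambda>_. 0) k \<in> U k) \<and> (\<forall>k\<ge>c. (\<lambda>_. 0) k = 0) \<and> 0 = (\<Sum>k<c. (\<lambda>_. 0) k)"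
      using sub vec.subspace_0 by auto
    ultimately have "f' = (\<lambda>_. 0)"
      using assms unfolding isotropic_decomp_def by metis
    then show ?thesis by (metis f'_def)
  qed
  moreover have "\<forall>v. \<exists>f. (\<forall>k<c. f k \<in> U k) \<and> v = (\<Sum>k<c. f k)"
    using assms unfolding isotropic_decomp_def by metis
  ultimately show ?thesis
    using sub unfolding direct_sum_decomp_def coord_subspace_def by auto
qed

lemma restrict_coords_sum_disjoint:
  fixes c :: nat
  assumes disj: "\<forall>k<c. \<forall>l<c. k \<noteq> l \<longrightarrow> V k \<inter> V l = {}"
    and f: "\<forall>k<c. f k \<in> coord_subspace (V k)" and "l < c"
  shows "restrict_coords (V l) (\<Sum>k<c. f k) = f l"
proof -
  have "restrict_coords (V l) (f k) = (if k = l then f l else 0)" if "k < c" for k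
  proof (cases "k = l")
    case True
    then show ?thesis using f that by (simp add: restrict_coords_id)
  next
    case False
    then have "V k \<inter> V l = {}" using disj that \<open>l < c\<close> by blast
    then show ?thesis
      using f that False by (auto simp: vec_eq_iff coord_subspace_def)
  qed
  then have "(\<Sum>k<c. restrict_coords (V l) (f k)) = (\<Sum>k<c. if k = l then f l else 0)"
    by (intro sum.cong) auto
  then show ?thesis
    using \<open>l < c\<close> by (simp add: restrict_coords_sum)
qed

lemma sum_restrict_coords_partition:
  fixes c :: nat
  assumes disj: "\<forall>k<c. \<forall>l<c. k \<noteq> l \<longrightarrow> V k \<inter> V l = {}" and cover: "(\<Union>k<c. V k) = UNIV"
  shows "(\<Sum>k<c. restrict_coords (V k) v) = v"
proof (rule vec_eq_iff[THEN iffD2], rule allI)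
  fix j
  obtain l where "l < c" "j \<in> V l"
    using cover by blast
  then have "(\<Sum>k<c. restrict_coords (V k) v $ j) = (\<Sum>k<c. if k = l then v $ j else 0)"
    using disj by (intro sum.cong) auto
  then show "(\<Sum>k<c. restrict_coords (V k) v) $ j = v $ j"
    using \<open>l < c\<close> by simp
qed

lemma isotropic_decomp_coord_subspaces:
  assumes "coloring E c V"
  shows "isotropic_decomp (graph_alt_space E :: ('a::field ^ 'n::{finite,linorder} ^ 'n::{finite,linorder}) set)
    c (\<lambda>k. coord_subspace (V k))"
proof -
  have nonempty: "\<forall>k<c. V k \<noteq> {}" and indep: "\<forall>k<c. independent_set E (V k)"
    and disj: "\<forall>k<c. \<forall>l<c. k \<noteq> l \<longrightarrow> V k \<inter> V l = {}" and cover: "(\<Union>k<c. V k) = UNIV"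
    using assms unfolding coloring_def by auto
  have "(coord_subspace (V k) :: ('a ^ 'n::{finite,linorder}) set) \<noteq> {0}" if k: "k < c" for k
  proof -
    obtain j where "j \<in> V k" using nonempty k by blast
    then have "(axis j 1 :: 'a ^ 'n::{finite,linorder}) \<in> coord_subspace (V k)"
      by (simp add: coord_subspace_def axis_def)
    then show ?thesis by (metis axis_eq_0_iff singletonD zero_neq_one)
  qed
  moreover have "\<exists>!f. (\<forall>k<c. f k \<in> coord_subspace (V k)) \<and> (\<forall>k\<ge>c. f k = 0) \<and> v = (\<Sum>k<c. f k)"
    for v :: "'a ^ 'n::{finite,linorder}"
  proof
    define f0 where "f0 k = (if k < c then restrict_coords (V k) v else 0)" for k
    have "(\<Sum>k<c. f0 k) = (\<Sum>k<c. restrict_coords (V k) v)"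
      by (intro sum.cong) (auto simp: f0_def)
    also have "\<dots> = v"
      by (rule sum_restrict_coords_partition[OF disj cover])
    finally have "v = (\<Sum>k<c. f0 k)" ..
    moreover have "\<forall>k<c. f0 k \<in> coord_subspace (V k)" "\<forall>k\<ge>c. f0 k = 0"
      by (simp_all add: f0_def restrict_coords_in_coord_subspace)
    ultimately show "(\<forall>k<c. f0 k \<in> coord_subspace (V k)) \<and> (\<forall>k\<ge>c. f0 k = 0) \<and> v = (\<Sum>k<c. f0 k)"
      by blast
    fix f assume "(\<forall>k<c. f k \<in> coord_subspace (V k)) \<and> (\<forall>k\<ge>c. f k = 0) \<and> v = (\<Sum>k<c. f k)"
    then have f_in: "\<forall>k<c. f k \<in> coord_subspace (V k)" and f_zero: "\<forall>k\<ge>c. f k = 0"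
      and f_sum: "v = (\<Sum>k<c. f k)"
      by blast+
    show "f = f0"
    proof
      fix k
      show "f k = f0 k"
      proof (cases "k < c")
        case True
        then have "f0 k = restrict_coords (V k) (\<Sum>l<c. f l)"
          by (simp add: f0_def f_sum)
        also have "\<dots> = f k"
          by (rule restrict_coords_sum_disjoint[OF disj f_in True])
        finally show ?thesis ..
      next
        case False
        then show ?thesis using f_zero by (simp add: f0_def)
      qed
    qed
  qed
  moreover have "isotropic (graph_alt_space E) (coord_subspace (V k) :: ('a ^ 'n::{finite,linorder}) set)"
    if "k < c" for k
    using indep that by (intro isotropic_coord_subspace) blast
  ultimately show ?thesis
    by (simp add: isotropic_decomp_def)
qed

lemma coloring_if_isotropic_decomp:
  assumes E: "simple_graph E"
    and decomp: "isotropic_decomp (graph_alt_space E :: ('a::field ^ 'n::{finite,linorder} ^ 'n::{finite,linorder}) set) c U"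
  shows "\<exists>V. coloring E c V"
proof -
  obtain S where S: "\<forall>k<c. S k \<subseteq> UNIV \<and> pivot_set (U k) (S k)"
    and S_disj: "\<forall>k<c. \<forall>l<c. k \<noteq> l \<longrightarrow> S k \<inter> S l = {}" and S_un: "(\<Union>k<c. S k) = UNIV"
    using exists_pivot_partition[OF direct_sum_decomp_if_isotropic_decomp[OF decomp]] by blast
  have "S k \<noteq> {} \<and> independent_set E (S k)" if "k < c" for k
  proof
    have iso: "isotropic (graph_alt_space E) (U k)" and "U k \<noteq> {0}"
      using decomp that unfolding isotropic_decomp_def by auto
    moreover have "0 \<in> U k"
      using iso unfolding isotropic_def by (simp add: vec.subspace_0)
    ultimately obtain u where "u \<in> U k" "u \<noteq> 0"
      by blast
    then show "S k \<noteq> {}"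
      using S that unfolding pivot_set_def coords_determine_def by auto
    show "independent_set E (S k)"
      using independent_set_if_isotropic_coord_units[OF E iso] S that
      unfolding pivot_set_def by blast
  qed
  then have "coloring E c S"
    using S_disj S_un unfolding coloring_def by blast
  then show ?thesis by blast
qed

lemma ex_independent_set_iff_ex_isotropic:
  assumes "simple_graph E"
  shows "(\<exists>S. independent_set E S \<and> card S = s) \<longleftrightarrow>
    (\<exists>U. isotropic (graph_alt_space E :: ('a::field ^ 'n::{finite,linorder} ^ 'n::{finite,linorder}) set) U
      \<and> vec.dim U = s)" (is "?L \<longleftrightarrow> ?R")
proof
  assume ?L
  then obtain S where "independent_set E S" "card S = s" by blast
  then show ?R
    using isotropic_coord_subspace
      dim_eq_card_pivot_set[OF subspace_coord_subspace pivot_set_coord_subspace] by blast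
next
  assume ?R
  then obtain U :: "('a ^ 'n::{finite,linorder}) set"
    where iso: "isotropic (graph_alt_space E) U" and "vec.dim U = s"
    by blast
  have "vec.subspace U" using iso unfolding isotropic_def by blast
  moreover have "U \<subseteq> coord_subspace UNIV" by (simp add: coord_subspace_def)
  ultimately obtain S where "pivot_set U S"
    using exists_pivot_set by blast
  then have "independent_set E S" "card S = s"
    using independent_set_if_isotropic_coord_units[OF assms iso]
      dim_eq_card_pivot_set[OF \<open>vec.subspace U\<close>] \<open>vec.dim U = s\<close>
    unfolding pivot_set_def by auto
  then show ?L by blast
qed

lemma ex_coloring_iff_ex_isotropic_decomp:
  assumes "simple_graph E"
  shows "(\<exists>V. coloring E c V) \<longleftrightarrow>
    (\<exists>U. isotropic_decomp (graph_alt_space E :: ('a::field ^ 'n::{finite,linorder} ^ 'n::{finite,linorder}) set) c U)"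
  using isotropic_decomp_coord_subspaces coloring_if_isotropic_decomp[OF assms] by blast

theorem theorem1p4:
  fixes E :: "'n::{finite,linorder} \<Rightarrow> 'n \<Rightarrow> bool"
  assumes "simple_graph E"
  shows "(\<forall>s::nat. (\<exists>S. independent_set E S \<and> card S = s) \<longleftrightarrow>
                   (\<exists>U. isotropic (graph_alt_space E :: ('a::field ^ 'n::{finite,linorder} ^ 'n::{finite,linorder}) set) U \<and> vec.dim U = s))
       \<and> graph_alpha E = space_alpha (graph_alt_space E :: ('a::field ^ 'n::{finite,linorder} ^ 'n::{finite,linorder}) set)
       \<and> (\<forall>c::nat. (\<exists>V. coloring E c V) \<longleftrightarrow>
                   (\<exists>U. isotropic_decomp (graph_alt_space E :: ('a::field ^ 'n::{finite,linorder} ^ 'n::{finite,linorder}) set) c U))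
       \<and> graph_chi E = space_chi (graph_alt_space E :: ('a::field ^ 'n::{finite,linorder} ^ 'n::{finite,linorder}) set)"
proof (intro conjI allI)
  let ?A = "graph_alt_space E :: ('a ^ 'n::{finite,linorder} ^ 'n::{finite,linorder}) set"
  show indep: "(\<exists>S. independent_set E S \<and> card S = s) \<longleftrightarrow> (\<exists>U. isotropic ?A U \<and> vec.dim U = s)"
    for s
    by (rule ex_independent_set_iff_ex_isotropic[OF assms])
  show color: "(\<exists>V. coloring E c V) \<longleftrightarrow> (\<exists>U. isotropic_decomp ?A c U)" for c
    by (rule ex_coloring_iff_ex_isotropic_decomp[OF assms])
  have "{card S | S. independent_set E S} = {n. \<exists>S. independent_set E S \<and> card S = n}"
    "{vec.dim U | U. isotropic ?A U} = {n. \<exists>U. isotropic ?A U \<and> vec.dim U = n}"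
    by blast+
  then have "{card S | S. independent_set E S} = {vec.dim U | U. isotropic ?A U}"
    using indep by simp
  then show "graph_alpha E = space_alpha ?A"
    unfolding graph_alpha_def space_alpha_def by simp
  show "graph_chi E = space_chi ?A"
    unfolding graph_chi_def space_chi_def using color by simp
qed

end
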